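(* Let $\alpha_0>\alpha_1>0$ and let $x_1^\circ>x_2^\circ$ be integers. Let $\mathrm{FS}_{x_1^\circ,x_2^\circ}$ denote the two-car system (continuous-time TASEP with two particles) in which the front car starts at $x_1^\circ$ and has speed $\alpha_0$, and the back car starts at $x_2^\circ$ and has speed $\alpha_1$. Let $G$ be a random variable independent of everything else with $\mathbb{P}(G=k)=(1-\alpha_1/\alpha_0)(\alpha_1/\alpha_0)^k$, $k\in\mathbb{Z}_{\ge0}$, and set $$y_1^\circ:=x_2^\circ+1+\min\bigl(G,\;x_1^\circ-x_2^\circ-1\bigr).$$ Let $\mathrm{SF}_{y_1^\circ,x_2^\circ}$ denote the two-car system in which the front car starts at the (random) position $y_1^\circ$ and has speed $\alpha_1$, and the back car starts at $x_2^\circ$ and has speed $\alpha_0$. Then the trajectory $\{x_2(t)\}_{t\in\mathbb{R}_{\ge0}}$ of the car in the back has the same distribution (as a process) in $\mathrm{FS}_{x_1^\circ,x_2^\circ}$ and in $\mathrm{SF}_{y_1^\circ,x_2^\circ}$.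
   Context: Two-car system: two particles at integer positions $x_1(t)>x_2(t)$ evolving in continuous time $t\ge0$. Each car carries an independent exponential clock whose rate is the car's speed. When a car's clock rings, the car jumps by $1$ to the right, provided the destination is not occupied by the other car; otherwise the jump is suppressed. In particular the front car performs a Poisson simple random walk with rate equal to its speed. *)

theory Defs
  imports "HOL-Probability.Probability"
begin

text \<open>A state is a pair (x1, x2) of integer positions, x1 the front car,
x2 the back car. The front car has speed a, the back car speed b. The process is the
continuous-time Markov chain with jump rates: (x1,x2) to (x1+1,x2) at rate a; (x1,x2) to
(x1,x2+1) at rate b provided x2+1 differs from x1 (otherwise the jump is suppressed).
Its transition function is given by uniformization at the total rate a+b: the number of
clock rings up to time t is Poisson with mean (a+b)t, and each ring belongs to the front
car with probability a/(a+b), to the back car otherwise.\<close>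

definition twocar_step :: "real \<Rightarrow> real \<Rightarrow> int \<times> int \<Rightarrow> (int \<times> int) pmf" where
  "twocar_step a b s =
     map_pmf (\<lambda>front. if front then (fst s + 1, snd s)
                       else if snd s + 1 = fst s then s else (fst s, snd s + 1))
             (bernoulli_pmf (a / (a + b)))"

definition twocar_steps :: "real \<Rightarrow> real \<Rightarrow> nat \<Rightarrow> int \<times> int \<Rightarrow> (int \<times> int) pmf" where
  "twocar_steps a b n s = ((\<lambda>p. bind_pmf p (twocar_step a b)) ^^ n) (return_pmf s)"

definition twocar_trans :: "real \<Rightarrow> real \<Rightarrow> real \<Rightarrow> int \<times> int \<Rightarrow> (int \<times> int) pmf" where
  "twocar_trans a b t s =
     (if t \<le> 0 then return_pmf s
      else bind_pmf (poisson_pmf ((a + b) * t)) (\<lambda>n. twocar_steps a b n s))"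

text \<open>Finite-dimensional distributions: starting in state s at time t0, the joint law of the
states at the successive times of the list ts (ts sorted, all at least t0).\<close>
fun twocar_path :: "real \<Rightarrow> real \<Rightarrow> int \<times> int \<Rightarrow> real \<Rightarrow> real list \<Rightarrow> (int \<times> int) list pmf" where
  "twocar_path a b s t0 [] = return_pmf []"
| "twocar_path a b s t0 (t # ts) =
     bind_pmf (twocar_trans a b (t - t0) s)
       (\<lambda>s'. map_pmf (\<lambda>rest. s' # rest) (twocar_path a b s' t ts))"

definition twocar_fdd :: "real \<Rightarrow> real \<Rightarrow> (int \<times> int) pmf \<Rightarrow> real list \<Rightarrow> (int \<times> int) list pmf" where
  "twocar_fdd a b init ts = bind_pmf init (\<lambda>s. twocar_path a b s 0 ts)"

definition back_car_fdd :: "real \<Rightarrow> real \<Rightarrow> (int \<times> int) pmf \<Rightarrow> real list \<Rightarrow> int list pmf" where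
  "back_car_fdd a b init ts = map_pmf (map snd) (twocar_fdd a b init ts)"

end

theory Submission
  imports Defs
begin

text \<open>
  The proof is an intertwining argument. Let \<open>\<Lambda>\<close> be the Markov kernel that keeps the back
  car and puts the front car at \<open>x2 + 1 + min G (x1 - x2 - 1)\<close>, with \<open>G\<close> geometric of
  parameter \<open>1 - \<alpha>1/\<alpha>0\<close>; for fixed back car it is a truncated geometric law on the gap.
  Both systems are uniformized at the same total rate \<open>\<alpha>0 + \<alpha>1\<close>, and a direct computation
  with probability mass functions shows that one step of the swapped system after \<open>\<Lambda>\<close> has the
  same law as one step of the original system followed by \<open>\<Lambda>\<close>. Hence \<open>\<Lambda>\<close> intertwines the
  transition functions, and since \<open>\<Lambda>\<close> never moves the back car, induction over the list of
  observation times shows that the back car has the same finite-dimensional distributions.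
\<close>

definition front_jump :: "int \<times> int \<Rightarrow> int \<times> int" where
  "front_jump s = (fst s + 1, snd s)"

definition back_jump :: "int \<times> int \<Rightarrow> int \<times> int" where
  "back_jump s = (if snd s + 1 = fst s then s else (fst s, snd s + 1))"

lemma twocar_step_eq_map_bernoulli:
  "twocar_step a b s =
     map_pmf (\<lambda>front. if front then front_jump s else back_jump s) (bernoulli_pmf (a / (a + b)))"
  unfolding twocar_step_def front_jump_def back_jump_def by simp

lemma pmf_map_front_jump: "pmf (map_pmf front_jump M) (u, v) = pmf M (u - 1, v)"
proof -
  have "inj front_jump" unfolding front_jump_def inj_def by auto
  moreover have "(u, v) = front_jump (u - 1, v)" by (simp add: front_jump_def)
  ultimately show ?thesis by (metis pmf_map_inj')
qed

lemma pmf_map_back_jump: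
  "pmf (map_pmf back_jump M) (u, v) =
     (if v + 1 = u then pmf M (u, v) else 0) + (if v \<noteq> u then pmf M (u, v - 1) else 0)"
proof -
  consider "v + 1 = u" | "v = u" | "v + 1 \<noteq> u" "v \<noteq> u" by blast
  then have "back_jump -` {(u, v)} =
      (if v + 1 = u then {(u, v), (u, v - 1)} else if v = u then {} else {(u, v - 1)})"
    by cases (auto simp: back_jump_def split: if_splits)
  then show ?thesis
    by (simp add: pmf_map measure_pmf_single measure_measure_pmf_finite)
qed

lemma pmf_bind_twocar_step:
  fixes a b :: real
  assumes "0 \<le> a" "0 \<le> b"
  shows "pmf (bind_pmf M (twocar_step a b)) (u, v) =
    a / (a + b) * pmf M (u - 1, v)
    + (1 - a / (a + b)) * ((if v + 1 = u then pmf M (u, v) else 0)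
                           + (if v \<noteq> u then pmf M (u, v - 1) else 0))"
proof -
  have "bind_pmf M (twocar_step a b) = bind_pmf (bernoulli_pmf (a / (a + b)))
          (\<lambda>front. map_pmf (\<lambda>s. if front then front_jump s else back_jump s) M)"
    unfolding twocar_step_eq_map_bernoulli map_pmf_def bind_assoc_pmf bind_return_pmf
    by (subst bind_commute_pmf) simp
  moreover have "0 \<le> a / (a + b)" "a / (a + b) \<le> 1"
    using assms by (auto simp: divide_le_eq_1)
  ultimately show ?thesis
    by (simp add: pmf_bind pmf_map_front_jump pmf_map_back_jump cong: if_cong)
qed

lemma pmf_twocar_step_bind:
  fixes a b :: real
  assumes "0 \<le> a" "0 \<le> b"
  shows "pmf (bind_pmf (twocar_step a b s) f) y =
    a / (a + b) * pmf (f (front_jump s)) y + (1 - a / (a + b)) * pmf (f (back_jump s)) y"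
proof -
  have "0 \<le> a / (a + b)" "a / (a + b) \<le> 1"
    using assms by (auto simp: divide_le_eq_1)
  then show ?thesis
    unfolding twocar_step_eq_map_bernoulli by (simp add: bind_map_pmf pmf_bind)
qed

lemma twocar_steps_0 [simp]: "twocar_steps a b 0 s = return_pmf s"
  by (simp add: twocar_steps_def)

lemma twocar_steps_Suc:
  "twocar_steps a b (Suc n) = (\<lambda>s. bind_pmf (twocar_steps a b n s) (twocar_step a b))"
  by (simp add: twocar_steps_def fun_eq_iff)

lemma twocar_step_preserves_order:
  "snd s < fst s \<Longrightarrow> y \<in> set_pmf (twocar_step a b s) \<Longrightarrow> snd y < fst y"
  unfolding twocar_step_eq_map_bernoulli by (auto simp: front_jump_def back_jump_def split: if_splits)

lemma twocar_steps_preserve_order: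
  "snd s < fst s \<Longrightarrow> y \<in> set_pmf (twocar_steps a b n s) \<Longrightarrow> snd y < fst y"
proof (induction n arbitrary: y)
  case 0
  then show ?case by simp
next
  case (Suc n)
  then show ?case by (auto simp: twocar_steps_Suc intro: twocar_step_preserves_order)
qed

lemma twocar_trans_preserves_order:
  "snd s < fst s \<Longrightarrow> y \<in> set_pmf (twocar_trans a b t s) \<Longrightarrow> snd y < fst y"
  unfolding twocar_trans_def by (auto split: if_splits intro: twocar_steps_preserve_order)

lemma geometric_pmf_prob_atLeast:
  assumes "0 < p" "p \<le> 1"
  shows "measure_pmf.prob (geometric_pmf p) {m..} = (1 - p) ^ m"
proof (induction m)
  case 0
  then show ?case by simp
next
  case (Suc m)
  have "{Suc m..} = {m..} - {m}" by auto
  then have "measure_pmf.prob (geometric_pmf p) {Suc m..} =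
      measure_pmf.prob (geometric_pmf p) {m..} - pmf (geometric_pmf p) m"
    by (simp add: measure_pmf.finite_measure_Diff measure_pmf_single)
  also have "\<dots> = (1 - p) ^ m - (1 - p) ^ m * p"
    using Suc assms by simp
  finally show ?case by (simp add: algebra_simps)
qed

definition swap_link :: "real \<Rightarrow> int \<times> int \<Rightarrow> (int \<times> int) pmf" where
  "swap_link p s =
     map_pmf (\<lambda>G. (snd s + 1 + min (int G) (fst s - snd s - 1), snd s)) (geometric_pmf p)"

definition trunc_geom :: "real \<Rightarrow> int \<Rightarrow> int \<Rightarrow> real" where
  "trunc_geom r d j =
     (if 0 < j \<and> j < d then r ^ nat (j - 1) * (1 - r) else if j = d then r ^ nat (d - 1) else 0)"

lemma pmf_swap_link:
  assumes "0 < p" "p \<le> 1" "x2 < x1"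
  shows "pmf (swap_link p (x1, x2)) (u, v) =
           (if v = x2 then trunc_geom (1 - p) (x1 - x2) (u - x2) else 0)"
proof -
  let ?pos = "\<lambda>G::nat. (x2 + 1 + min (int G) (x1 - x2 - 1), x2)"
  have "?pos -` {(u, v)} =
      (if v = x2 \<and> x2 < u \<and> u < x1 then {nat (u - x2 - 1)}
       else if v = x2 \<and> u = x1 then {nat (x1 - x2 - 1)..} else {})"
    using assms by auto
  then show ?thesis
    using assms geometric_pmf_prob_atLeast[of p]
    by (simp add: swap_link_def pmf_map measure_pmf_single trunc_geom_def)
qed

lemma swap_link_keeps_back_car: "y \<in> set_pmf (swap_link p s) \<Longrightarrow> snd y = snd s"
  unfolding swap_link_def by auto

lemma trunc_geom_shift:
  fixes q r :: real and d i :: int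
  assumes qr: "1 - q = q * r" and i: "1 \<le> i"
  shows "q * trunc_geom r (d + 1) (i + 1) = (1 - q) * trunc_geom r d i"
proof -
  have "nat i = Suc (nat (i - 1))"
    using i by simp
  then have pow: "r ^ nat i = r * r ^ nat (i - 1)"
    by simp
  consider "i < d" | "i = d" | "d < i" by linarith
  then show ?thesis
    using i qr pow by cases (simp_all add: trunc_geom_def)
qed

lemma trunc_geom_balance_back_stays:
  fixes q r :: real and d j :: int
  assumes qr: "1 - q = q * r" and d: "1 \<le> d"
  shows "(1 - q) * trunc_geom r d (j - 1) + q * (if j = 1 then trunc_geom r d 1 else 0) =
         q * trunc_geom r (d + 1) j + (1 - q) * (if d = 1 then trunc_geom r 1 j else 0)"
proof -
  consider "j \<le> 0" | "j = 1" "d = 1" | "j = 1" "1 < d" | "2 \<le> j"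
    using d by linarith
  then show ?thesis
  proof cases
    case 4
    then have "q * trunc_geom r (d + 1) j = (1 - q) * trunc_geom r d (j - 1)"
      using trunc_geom_shift[OF qr, of "j - 1" d] by simp
    then show ?thesis
      using 4 by (simp add: trunc_geom_def)
  qed (use d qr in \<open>simp_all add: trunc_geom_def algebra_simps\<close>)
qed

lemma trunc_geom_balance_back_moves:
  fixes q r :: real and d j :: int
  assumes qr: "1 - q = q * r" and d: "1 \<le> d"
  shows "q * (if j \<noteq> 1 then trunc_geom r d j else 0) =
         (1 - q) * (if d \<noteq> 1 then trunc_geom r (d - 1) (j - 1) else 0)"
proof (cases "j \<le> 1 \<or> d = 1")
  case True
  then show ?thesis
    using d by (auto simp: trunc_geom_def)
next
  case False
  then show ?thesis
    using trunc_geom_shift[OF qr, of "j - 1" "d - 1"] by simp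
qed

lemma swap_link_twocar_step:
  fixes a b :: real
  assumes ab: "b < a" "0 < b" and s: "snd s < fst s"
  shows "bind_pmf (swap_link (1 - b / a) s) (twocar_step b a) =
         bind_pmf (twocar_step a b s) (swap_link (1 - b / a))"
proof (rule pmf_eqI)
  fix y :: "int \<times> int"
  obtain x1 x2 where s_eq: "s = (x1, x2)" by fastforce
  obtain u v where y_eq: "y = (u, v)" by fastforce
  define q where "q = a / (a + b)"
  define r where "r = b / a"
  let ?\<Lambda> = "swap_link (1 - b / a)"
  \<comment> \<open>The parameter of the geometric law is chosen exactly so that this holds.\<close>
  have qr: "1 - q = q * r" and q_swap: "b / (b + a) = 1 - q"
    using ab by (simp_all add: q_def r_def field_simps)
  have d: "1 \<le> x1 - x2" and x: "x2 < x1"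
    using s s_eq by simp_all
  have \<Lambda>: "pmf (?\<Lambda> (x1', x2')) (u', v') =
      (if v' = x2' then trunc_geom r (x1' - x2') (u' - x2') else 0)" if "x2' < x1'" for x1' x2' u' v'
    using pmf_swap_link[of "1 - b / a" x2' x1'] ab that by (simp add: r_def)
  have link_then_step: "pmf (bind_pmf (?\<Lambda> s) (twocar_step b a)) y =
      (1 - q) * pmf (?\<Lambda> s) (u - 1, v)
      + q * ((if v + 1 = u then pmf (?\<Lambda> s) (u, v) else 0)
             + (if v \<noteq> u then pmf (?\<Lambda> s) (u, v - 1) else 0))"
    using ab by (simp add: y_eq pmf_bind_twocar_step q_swap)
  have step_then_link: "pmf (bind_pmf (twocar_step a b s) ?\<Lambda>) y =
      q * pmf (?\<Lambda> (x1 + 1, x2)) y + (1 - q) * pmf (?\<Lambda> (back_jump s)) y"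
    using ab by (simp add: pmf_twocar_step_bind front_jump_def s_eq q_def)
  consider "v = x2" | "v = x2 + 1" | "v \<noteq> x2" "v \<noteq> x2 + 1" by blast
  then show "pmf (bind_pmf (?\<Lambda> s) (twocar_step b a)) y = pmf (bind_pmf (twocar_step a b s) ?\<Lambda>) y"
  proof cases
    case 1
    have "pmf (bind_pmf (?\<Lambda> s) (twocar_step b a)) y =
        (1 - q) * trunc_geom r (x1 - x2) (u - x2 - 1)
        + q * (if u - x2 = 1 then trunc_geom r (x1 - x2) 1 else 0)"
      unfolding link_then_step using 1 x by (simp add: y_eq s_eq \<Lambda> algebra_simps)
    also have "\<dots> = q * trunc_geom r (x1 - x2 + 1) (u - x2)
        + (1 - q) * (if x1 - x2 = 1 then trunc_geom r 1 (u - x2) else 0)"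
      by (rule trunc_geom_balance_back_stays[OF qr d])
    also have "\<dots> = pmf (bind_pmf (twocar_step a b s) ?\<Lambda>) y"
      unfolding step_then_link using 1 x by (simp add: y_eq s_eq \<Lambda> back_jump_def algebra_simps)
    finally show ?thesis .
  next
    case 2
    have "pmf (bind_pmf (?\<Lambda> s) (twocar_step b a)) y =
        q * (if u - x2 \<noteq> 1 then trunc_geom r (x1 - x2) (u - x2) else 0)"
      unfolding link_then_step using 2 x by (simp add: y_eq s_eq \<Lambda> algebra_simps)
    also have "\<dots> = (1 - q) * (if x1 - x2 \<noteq> 1 then trunc_geom r (x1 - x2 - 1) (u - x2 - 1) else 0)"
      by (rule trunc_geom_balance_back_moves[OF qr d])
    also have "\<dots> = pmf (bind_pmf (twocar_step a b s) ?\<Lambda>) y"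
      unfolding step_then_link using 2 x by (simp add: y_eq s_eq \<Lambda> back_jump_def algebra_simps)
    finally show ?thesis .
  next
    case 3
    then show ?thesis
      unfolding link_then_step step_then_link using x by (simp add: y_eq s_eq \<Lambda> back_jump_def)
  qed
qed

lemma swap_link_twocar_steps:
  fixes a b :: real
  assumes ab: "b < a" "0 < b" and s: "snd s < fst s"
  shows "bind_pmf (swap_link (1 - b / a) s) (twocar_steps b a n) =
         bind_pmf (twocar_steps a b n s) (swap_link (1 - b / a))"
proof (induction n)
  case 0
  then show ?case by (simp add: bind_return_pmf bind_return_pmf')
next
  case (Suc n)
  let ?\<Lambda> = "swap_link (1 - b / a)"
  have "bind_pmf (?\<Lambda> s) (twocar_steps b a (Suc n)) =
        bind_pmf (bind_pmf (?\<Lambda> s) (twocar_steps b a n)) (twocar_step b a)"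
    by (simp add: twocar_steps_Suc bind_assoc_pmf)
  also have "\<dots> = bind_pmf (twocar_steps a b n s) (\<lambda>s'. bind_pmf (?\<Lambda> s') (twocar_step b a))"
    by (simp add: Suc bind_assoc_pmf)
  also have "\<dots> = bind_pmf (twocar_steps a b n s) (\<lambda>s'. bind_pmf (twocar_step a b s') ?\<Lambda>)"
    by (rule bind_pmf_cong)
       (auto intro: swap_link_twocar_step[OF ab] twocar_steps_preserve_order[OF s])
  also have "\<dots> = bind_pmf (twocar_steps a b (Suc n) s) ?\<Lambda>"
    by (simp add: twocar_steps_Suc bind_assoc_pmf)
  finally show ?case .
qed

lemma swap_link_twocar_trans:
  fixes a b :: real
  assumes ab: "b < a" "0 < b" and s: "snd s < fst s"
  shows "bind_pmf (swap_link (1 - b / a) s) (twocar_trans b a t) =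
         bind_pmf (twocar_trans a b t s) (swap_link (1 - b / a))"
proof (cases "t \<le> 0")
  case True
  then have "twocar_trans b a t = return_pmf" "twocar_trans a b t s = return_pmf s"
    by (simp_all add: twocar_trans_def fun_eq_iff)
  then show ?thesis
    by (simp add: bind_return_pmf bind_return_pmf')
next
  case False
  then show ?thesis
    unfolding twocar_trans_def
    by (simp add: add.commute bind_commute_pmf[of "swap_link _ _"] bind_assoc_pmf
        swap_link_twocar_steps[OF ab s])
qed

lemma back_car_path_swap_link:
  fixes a b :: real
  assumes ab: "b < a" "0 < b"
  shows "snd s < fst s \<Longrightarrow>
    map_pmf (map snd) (bind_pmf (swap_link (1 - b / a) s) (\<lambda>s'. twocar_path b a s' t0 ts)) =
    map_pmf (map snd) (twocar_path a b s t0 ts)"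
proof (induction ts arbitrary: s t0)
  case Nil
  then show ?case by simp
next
  case (Cons t ts)
  let ?\<Lambda> = "swap_link (1 - b / a)"
  let ?backs = "\<lambda>s' path. map_pmf (\<lambda>r. snd s' # map snd r) path"
  have "map_pmf (map snd) (bind_pmf (?\<Lambda> s) (\<lambda>s'. twocar_path b a s' t0 (t # ts))) =
        bind_pmf (bind_pmf (?\<Lambda> s) (twocar_trans b a (t - t0)))
          (\<lambda>s'. ?backs s' (twocar_path b a s' t ts))"
    by (simp add: bind_assoc_pmf map_bind_pmf map_pmf_comp)
  also have "\<dots> = bind_pmf (twocar_trans a b (t - t0) s)
      (\<lambda>s'. bind_pmf (?\<Lambda> s') (\<lambda>s''. ?backs s'' (twocar_path b a s'' t ts)))"
    by (simp add: swap_link_twocar_trans[OF ab Cons.prems] bind_assoc_pmf)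
  also have "\<dots> = bind_pmf (twocar_trans a b (t - t0) s)
      (\<lambda>s'. map_pmf (Cons (snd s'))
              (map_pmf (map snd) (bind_pmf (?\<Lambda> s') (\<lambda>s''. twocar_path b a s'' t ts))))"
  proof (intro bind_pmf_cong refl)
    fix s'
    have "bind_pmf (?\<Lambda> s') (\<lambda>s''. ?backs s'' (twocar_path b a s'' t ts)) =
        bind_pmf (?\<Lambda> s') (\<lambda>s''. map_pmf (Cons (snd s')) (map_pmf (map snd) (twocar_path b a s'' t ts)))"
      by (intro bind_pmf_cong refl) (auto dest: swap_link_keeps_back_car simp: map_pmf_comp)
    then show "bind_pmf (?\<Lambda> s') (\<lambda>s''. ?backs s'' (twocar_path b a s'' t ts)) =
        map_pmf (Cons (snd s')) (map_pmf (map snd) (bind_pmf (?\<Lambda> s') (\<lambda>s''. twocar_path b a s'' t ts)))"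
      by (simp add: map_bind_pmf)
  qed
  also have "\<dots> = bind_pmf (twocar_trans a b (t - t0) s)
      (\<lambda>s'. map_pmf (Cons (snd s')) (map_pmf (map snd) (twocar_path a b s' t ts)))"
    by (intro bind_pmf_cong refl)
       (simp add: Cons.IH twocar_trans_preserves_order[OF Cons.prems])
  also have "\<dots> = map_pmf (map snd) (twocar_path a b s t0 (t # ts))"
    by (simp add: map_bind_pmf map_pmf_comp)
  finally show ?case .
qed

theorem theorem1p2:
  fixes \<alpha>0 \<alpha>1 :: real and x1 x2 :: int
  assumes "\<alpha>0 > \<alpha>1" and "\<alpha>1 > 0" and "x1 > x2"
  shows "\<forall>ts. sorted ts \<and> (\<forall>t\<in>set ts. 0 \<le> t) \<longrightarrow>
           back_car_fdd \<alpha>0 \<alpha>1 (return_pmf (x1, x2)) ts =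
           back_car_fdd \<alpha>1 \<alpha>0
             (map_pmf (\<lambda>G. (x2 + 1 + min (int G) (x1 - x2 - 1), x2))
                      (geometric_pmf (1 - \<alpha>1 / \<alpha>0))) ts"
proof -
  have "map_pmf (\<lambda>G. (x2 + 1 + min (int G) (x1 - x2 - 1), x2)) (geometric_pmf (1 - \<alpha>1 / \<alpha>0))
      = swap_link (1 - \<alpha>1 / \<alpha>0) (x1, x2)"
    by (simp add: swap_link_def)
  \<comment> \<open>The identity holds for every list of times, sorted and nonnegative or not.\<close>
  then show ?thesis
    using back_car_path_swap_link[OF assms(1,2), of "(x1, x2)" 0] assms(3)
    by (simp add: back_car_fdd_def twocar_fdd_def bind_return_pmf)
qed

end
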